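(* Let $n\in\mathbb{N}$, $\hbar\in{]0,\infty[}$, $\mu\in\mathbb{R}$ and $f\in\bigoplus_k\mathscr{P}^{k,k}(\mathbb{C}^{1+n})$. Then $\Omega_{\hbar,\mu}(f)\mathbb{1}-f_{\mathrm{av}}\in\langle\mathcal{J}-\mu\rangle$.
   Context: $\mathscr{P}^{k,k}(\mathbb{C}^{1+n})$ is the span of $z^K\overline{z}^L$, $|K|=|L|=k$. Wick product: $f\star_\hbar g=\sum_K\frac{\hbar^{|K|}}{K!}\frac{\partial^{|K|}f}{\partial\overline{z}^K}\frac{\partial^{|K|}g}{\partial z^K}$; $\langle\mathcal{J}-\mu\rangle$ is the $^*$-ideal of $(\bigoplus_k\mathscr{P}^{k,k}(\mathbb{C}^{1+n}),\star_\hbar)$ (involution: complex conjugation) generated by $\mathcal{J}-\mu\mathbb{1}$, where $\mathcal{J}=\sum_jz_j\overline{z_j}$. $\tau_k$ is the linear functional on $\mathscr{P}^{k,k}$ with $\tau_k(z^K\overline{z}^L)=\delta_{K,L}\frac{K!\,n!}{(k+n)!}$. For $f=\sum_kf_k$ with $f_k\in\mathscr{P}^{k,k}$: $f_{\mathrm{av}}=\sum_k\mathcal{J}^k\tau_k(f_k)$ (pointwise powers) and $\Omega_{\hbar,\mu}(f)=\sum_k\hbar^k(\mu/\hbar)_{\downarrow,k}\tau_k(f_k)$, where $(x)_{\downarrow,k}=\prod_{j=0}^{k-1}(x-j)$. *)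

theory Defs
  imports Complex_Main
begin

text \<open>Multi-indices are functions nat => nat; the variables of C^(1+n) are
  indexed by 0..n.  A polynomial in z and conj z is represented by its
  coefficient function: p (A,B) is the coefficient of z^A (conj z)^B.\<close>

type_synonym mindex = "nat \<Rightarrow> nat"
type_synonym wpoly = "mindex \<times> mindex \<Rightarrow> complex"

definition psupp :: "wpoly \<Rightarrow> (mindex \<times> mindex) set" where
  "psupp f = {p. f p \<noteq> 0}"

definition mabs :: "mindex \<Rightarrow> nat" where
  "mabs K = (\<Sum>i\<in>{i. K i \<noteq> 0}. K i)"

definition mfact :: "mindex \<Rightarrow> nat" where
  "mfact K = (\<Prod>i\<in>{i. K i \<noteq> 0}. fact (K i))"

definition madd :: "mindex \<Rightarrow> mindex \<Rightarrow> mindex" where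
  "madd A B = (\<lambda>i. A i + B i)"

definition mle :: "mindex \<Rightarrow> mindex \<Rightarrow> bool" where
  "mle K B \<longleftrightarrow> (\<forall>i. K i \<le> B i)"

definition Alg :: "nat \<Rightarrow> wpoly set" where
  "Alg n = {f. finite (psupp f) \<and>
     (\<forall>(A,B)\<in>psupp f. (\<forall>i>n. A i = 0 \<and> B i = 0) \<and> mabs A = mabs B)}"

definition pmul :: "wpoly \<Rightarrow> wpoly \<Rightarrow> wpoly" where
  "pmul f g = (\<lambda>(E,F). \<Sum>(A,B)\<in>psupp f. \<Sum>(C,D)\<in>psupp g.
      (if madd A C = E \<and> madd B D = F then f (A,B) * g (C,D) else 0))"

definition pone :: wpoly where
  "pone = (\<lambda>(A,B). if A = (\<lambda>_. 0) \<and> B = (\<lambda>_. 0) then 1 else 0)"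

primrec ppow :: "wpoly \<Rightarrow> nat \<Rightarrow> wpoly" where
  "ppow f 0 = pone"
| "ppow f (Suc k) = pmul f (ppow f k)"

definition dzbar :: "mindex \<Rightarrow> wpoly \<Rightarrow> wpoly" where
  "dzbar K f = (\<lambda>(A,E). f (A, madd E K) * of_nat (mfact (madd E K)) / of_nat (mfact E))"

definition dz :: "mindex \<Rightarrow> wpoly \<Rightarrow> wpoly" where
  "dz K f = (\<lambda>(E,B). f (madd E K, B) * of_nat (mfact (madd E K)) / of_nat (mfact E))"

text \<open>Wick product; the sum ranges over all multi-indices K for which the
  conj-z-derivative of f can be nonzero (all other terms vanish).\<close>
definition wick :: "real \<Rightarrow> wpoly \<Rightarrow> wpoly \<Rightarrow> wpoly" where
  "wick h f g = (\<lambda>p. \<Sum>K\<in>{K. \<exists>(A,B)\<in>psupp f. mle K B}.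
      complex_of_real (h ^ mabs K / real (mfact K)) * pmul (dzbar K f) (dz K g) p)"

text \<open>Involution: complex conjugation, conj(z^A conj(z)^B) = z^B conj(z)^A.\<close>
definition invol :: "wpoly \<Rightarrow> wpoly" where
  "invol f = (\<lambda>(A,B). cnj (f (B,A)))"

inductive_set star_ideal :: "nat \<Rightarrow> real \<Rightarrow> wpoly \<Rightarrow> wpoly set"
  for n :: nat and h :: real and a :: wpoly where
  gen: "a \<in> star_ideal n h a"
| add: "x \<in> star_ideal n h a \<Longrightarrow> y \<in> star_ideal n h a \<Longrightarrow> (\<lambda>p. x p + y p) \<in> star_ideal n h a"
| smult: "x \<in> star_ideal n h a \<Longrightarrow> (\<lambda>p. c * x p) \<in> star_ideal n h a"
| lmult: "x \<in> star_ideal n h a \<Longrightarrow> g \<in> Alg n \<Longrightarrow> wick h g x \<in> star_ideal n h a"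
| rmult: "x \<in> star_ideal n h a \<Longrightarrow> g \<in> Alg n \<Longrightarrow> wick h x g \<in> star_ideal n h a"
| inv: "x \<in> star_ideal n h a \<Longrightarrow> invol x \<in> star_ideal n h a"

text \<open>J = sum_{j=0}^n z_j conj(z_j).\<close>
definition Jpoly :: "nat \<Rightarrow> wpoly" where
  "Jpoly n = (\<lambda>(A,B). if A = B \<and> (\<exists>j\<le>n. A = (\<lambda>i. if i = j then 1 else 0)) then 1 else 0)"

definition hpart :: "wpoly \<Rightarrow> nat \<Rightarrow> wpoly" where
  "hpart f k = (\<lambda>(A,B). if mabs A = k then f (A,B) else 0)"

definition tau :: "nat \<Rightarrow> nat \<Rightarrow> wpoly \<Rightarrow> complex" where
  "tau n k f = (\<Sum>(A,B)\<in>psupp f. f (A,B) *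
      (if A = B then of_real (real (mfact A) * fact n / fact (k + n)) else 0))"

definition degs :: "wpoly \<Rightarrow> nat set" where
  "degs f = (\<lambda>(A,B). mabs A) ` psupp f"

definition ffall :: "real \<Rightarrow> nat \<Rightarrow> real" where
  "ffall x k = (\<Prod>j<k. x - real j)"

definition favg :: "nat \<Rightarrow> wpoly \<Rightarrow> wpoly" where
  "favg n f = (\<lambda>p. \<Sum>k\<in>degs f. ppow (Jpoly n) k p * tau n k (hpart f k))"

definition Omega :: "nat \<Rightarrow> real \<Rightarrow> real \<Rightarrow> wpoly \<Rightarrow> complex" where
  "Omega n h \<mu> f = (\<Sum>k\<in>degs f. of_real (h ^ k * ffall (\<mu> / h) k) * tau n k (hpart f k))"

end

theory Submission
  imports Defs
begin

(* Write X = J - mu 1. In a Wick product X star g only the multi-indices 0 and e_j (j <= n) occur,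
   and the z-bar-derivative of X along e_j is z_j. Hence X star g = X g + hbar sum_j z_j dg/dz_j,
   which by Euler's identity is X g + hbar k g when g is homogeneous of degree k. Taking g = J^k
   gives J^(k+1) - (mu - hbar k) J^k in <X>, so by induction J^k - hbar^k (mu/hbar)_(down,k) 1
   lies in <X>; and Omega(f) 1 - f_av is the combination of these elements with coefficients
   -tau_k(f_k). *)

definition mzero :: mindex where
  "mzero = (\<lambda>_. 0)"

definition munit :: "nat \<Rightarrow> mindex" where
  "munit j = (\<lambda>i. if i = j then 1 else 0)"

definition msub :: "mindex \<Rightarrow> mindex \<Rightarrow> mindex" where
  "msub E A = (\<lambda>i. E i - A i)"

lemma mzero_apply [simp]: "mzero i = 0"
  by (simp add: mzero_def)

lemma mabs_eq_sum_atMost: "\<forall>i>n. K i = 0 \<Longrightarrow> mabs K = (\<Sum>i\<le>n. K i)"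
  unfolding mabs_def by (rule sum.mono_neutral_left) (auto simp: not_less[symmetric])

lemma mfact_eq_prod_atMost: "\<forall>i>n. K i = 0 \<Longrightarrow> mfact K = (\<Prod>i\<le>n. fact (K i))"
  unfolding mfact_def by (rule prod.mono_neutral_left) (auto simp: not_less[symmetric])

lemma mfact_pos: "mfact K > 0"
  unfolding mfact_def by (rule prod_pos) auto

lemma mabs_mzero [simp]: "mabs mzero = 0"
  and mfact_mzero [simp]: "mfact mzero = 1"
  by (auto simp: mabs_def mfact_def mzero_def)

lemma mabs_munit [simp]: "mabs (munit j) = 1"
  by (subst mabs_eq_sum_atMost[of j]) (auto simp: munit_def)

lemma mfact_munit [simp]: "mfact (munit j) = 1"
proof -
  have "{i. munit j i \<noteq> 0} = {j}"
    by (auto simp: munit_def)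
  then show ?thesis
    by (simp add: mfact_def munit_def)
qed

lemma munit_neq_mzero [simp]: "munit j \<noteq> mzero" "mzero \<noteq> munit j"
  by (auto simp: munit_def mzero_def fun_eq_iff)

lemma munit_eq_iff [simp]: "munit j = munit m \<longleftrightarrow> j = m"
  by (auto simp: munit_def fun_eq_iff)

lemma madd_mzero [simp]: "madd E mzero = E" "madd mzero E = E"
  by (simp_all add: madd_def mzero_def)

lemma msub_mzero [simp]: "msub E mzero = E"
  by (simp add: msub_def mzero_def)

lemma mle_mzero [simp]: "mle mzero E" "mle K mzero \<longleftrightarrow> K = mzero"
  by (auto simp: mle_def mzero_def fun_eq_iff)

lemma mle_munit_iff: "mle K (munit j) \<longleftrightarrow> K = mzero \<or> K = munit j"
proof
  assume le: "mle K (munit j)"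
  then have off: "K i = 0" if "i \<noteq> j" for i
    using le that by (auto simp: mle_def munit_def dest: spec[of _ i])
  from le have "K j \<le> 1"
    by (auto simp: mle_def munit_def dest: spec[of _ j])
  then consider "K j = 0" | "K j = 1"
    by linarith
  then show "K = mzero \<or> K = munit j"
    unfolding mzero_def munit_def fun_eq_iff by cases (use off in metis)+
qed (auto simp: mle_def munit_def mzero_def)

lemma munit_mle_iff: "mle (munit j) E \<longleftrightarrow> E j \<noteq> 0"
  by (auto simp: mle_def munit_def)

lemma madd_munit_eq_munit_iff: "madd E (munit j) = munit m \<longleftrightarrow> E = mzero \<and> m = j"
proof
  assume eq: "madd E (munit j) = munit m"
  have "E j + 1 = munit m j"
    using fun_cong[OF eq, of j] by (simp add: madd_def munit_def)
  then have "m = j" "E j = 0"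
    by (auto simp: munit_def split: if_splits)
  moreover have "E i = 0" if "i \<noteq> j" for i
    using fun_cong[OF eq, of i] that \<open>m = j\<close> by (simp add: madd_def munit_def)
  ultimately show "E = mzero \<and> m = j"
    unfolding mzero_def fun_eq_iff by metis
qed simp

lemma madd_munit_neq_mzero: "madd E (munit j) \<noteq> mzero"
  by (auto simp: madd_def munit_def mzero_def fun_eq_iff)

lemma madd_msub: "mle A E \<Longrightarrow> madd (msub E A) A = E"
  by (auto simp: madd_def msub_def mle_def fun_eq_iff)

lemma madd_right_cancel: "madd E K = madd E' K \<longleftrightarrow> E = E'"
  by (auto simp: madd_def fun_eq_iff)

lemma madd_eq_iff: "madd A C = E \<longleftrightarrow> mle A E \<and> C = msub E A"
  unfolding madd_def msub_def mle_def fun_eq_iff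
  by (metis add_diff_cancel_left' le_add1 le_add_diff_inverse)

lemma mabs_madd_munit:
  assumes "\<forall>i>n. C i = 0" "j \<le> n"
  shows "mabs (madd C (munit j)) = mabs C + 1"
proof -
  have "mabs (madd C (munit j)) = (\<Sum>i\<le>n. C i + munit j i)"
    using assms by (subst mabs_eq_sum_atMost[of n]) (auto simp: madd_def munit_def)
  also have "\<dots> = (\<Sum>i\<le>n. C i) + 1"
    using assms(2) by (simp add: sum.distrib munit_def)
  finally show ?thesis
    using mabs_eq_sum_atMost[OF assms(1)] by simp
qed

lemma mfact_eq_mult_mfact_msub_munit:
  assumes "\<forall>i>n. E i = 0" "j \<le> n" "E j \<noteq> 0"
  shows "mfact E = E j * mfact (msub E (munit j))"
proof -
  have bounded: "\<forall>i>n. msub E (munit j) i = 0"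
    using assms by (simp add: msub_def)
  then have "mfact (msub E (munit j)) = fact (E j - 1) * (\<Prod>i\<in>{..n}-{j}. fact (msub E (munit j) i))"
    using assms(2) by (simp add: mfact_eq_prod_atMost[OF bounded] prod.remove[of "{..n}" j])
      (simp add: msub_def munit_def)
  also have "(\<Prod>i\<in>{..n}-{j}. fact (msub E (munit j) i)) = (\<Prod>i\<in>{..n}-{j}. fact (E i))"
    by (rule prod.cong) (auto simp: msub_def munit_def)
  finally have "mfact (msub E (munit j)) = fact (E j - 1) * (\<Prod>i\<in>{..n}-{j}. fact (E i))" .
  moreover have "mfact E = fact (E j) * (\<Prod>i\<in>{..n}-{j}. fact (E i))"
    using assms by (simp add: mfact_eq_prod_atMost[OF assms(1)] prod.remove[of "{..n}" j])
  ultimately show ?thesis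
    using assms(3) by (simp add: fact_reduce)
qed

lemma Alg_finite_psupp: "g \<in> Alg n \<Longrightarrow> finite (psupp g)"
  by (simp add: Alg_def)

lemma Alg_nonzeroD:
  "g \<in> Alg n \<Longrightarrow> g (A,B) \<noteq> 0 \<Longrightarrow> (\<forall>i>n. A i = 0) \<and> (\<forall>i>n. B i = 0) \<and> mabs A = mabs B"
  by (auto simp: Alg_def psupp_def)

lemma pmul_eq_sum:
  assumes "finite (psupp g)" "finite T" "psupp f \<subseteq> T"
  shows "pmul f g (E,F) =
    (\<Sum>(A,B)\<in>T. f (A,B) * (if mle A E \<and> mle B F then g (msub E A, msub F B) else 0))"
proof -
  have inner: "(\<Sum>(C,D)\<in>psupp g. if madd A C = E \<and> madd B D = F then f (A,B) * g (C,D) else 0)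
     = f (A,B) * (if mle A E \<and> mle B F then g (msub E A, msub F B) else 0)" for A B
  proof -
    have "(\<Sum>(C,D)\<in>psupp g. if madd A C = E \<and> madd B D = F then f (A,B) * g (C,D) else 0)
      = (\<Sum>q\<in>psupp g. if mle A E \<and> mle B F \<and> q = (msub E A, msub F B) then f (A,B) * g q else 0)"
      by (rule sum.cong) (auto simp: madd_eq_iff split: if_splits)
    also have "\<dots> = f (A,B) * (if mle A E \<and> mle B F then g (msub E A, msub F B) else 0)"
      using assms(1) by (auto simp: psupp_def)
    finally show ?thesis .
  qed
  have "pmul f g (E,F) =
      (\<Sum>(A,B)\<in>psupp f. f (A,B) * (if mle A E \<and> mle B F then g (msub E A, msub F B) else 0))"
    unfolding pmul_def using inner by (simp add: case_prod_beta)
  also have "\<dots> =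
      (\<Sum>(A,B)\<in>T. f (A,B) * (if mle A E \<and> mle B F then g (msub E A, msub F B) else 0))"
    by (rule sum.mono_neutral_left) (use assms in \<open>auto simp: psupp_def\<close>)
  finally show ?thesis .
qed

lemma pmul_diff_cmult_left:
  assumes "finite (psupp f)" "finite (psupp f')" "finite (psupp g)"
  shows "pmul (\<lambda>p. f p - c * f' p) g (E,F) = pmul f g (E,F) - c * pmul f' g (E,F)"
proof -
  let ?T = "psupp f \<union> psupp f'"
  have "psupp (\<lambda>p. f p - c * f' p) \<subseteq> ?T"
    by (auto simp: psupp_def)
  then show ?thesis
    using assms
    by (simp add: pmul_eq_sum[of g ?T] sum_subtractf sum_distrib_left case_prod_beta algebra_simps)
qed

lemma pone_eq: "pone (A,B) = (if A = mzero \<and> B = mzero then 1 else 0)"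
  by (simp add: pone_def mzero_def)

lemma psupp_pone: "psupp pone = {(mzero, mzero)}"
  by (auto simp: psupp_def pone_eq split: if_splits)

lemma pmul_pone_left:
  assumes "finite (psupp g)"
  shows "pmul pone g (E,F) = g (E,F)"
  using assms by (simp add: pmul_eq_sum[of g "{(mzero, mzero)}"] psupp_pone pone_eq)

lemma Jpoly_eq: "Jpoly n (A,B) = (if A = B \<and> (\<exists>j\<le>n. A = munit j) then 1 else 0)"
  by (simp add: Jpoly_def munit_def)

lemma psupp_Jpoly: "psupp (Jpoly n) = (\<lambda>j. (munit j, munit j)) ` {..n}"
  by (auto simp: psupp_def Jpoly_eq split: if_splits)

lemma pmul_Jpoly_left:
  assumes "finite (psupp g)"
  shows "pmul (Jpoly n) g (E,F) =
    (\<Sum>j\<le>n. if mle (munit j) E \<and> mle (munit j) F then g (msub E (munit j), msub F (munit j)) else 0)"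
proof -
  have "inj_on (\<lambda>j. (munit j, munit j)) {..n}"
    by (auto simp: inj_on_def)
  then show ?thesis
    using assms by (simp add: pmul_eq_sum[of g "psupp (Jpoly n)"] psupp_Jpoly sum.reindex Jpoly_eq)
qed

definition Jpoly_minus :: "nat \<Rightarrow> real \<Rightarrow> wpoly" where
  "Jpoly_minus n \<mu> = (\<lambda>p. Jpoly n p - of_real \<mu> * pone p)"

lemma psupp_Jpoly_minus:
  "psupp (Jpoly_minus n \<mu>) \<subseteq> insert (mzero, mzero) ((\<lambda>j. (munit j, munit j)) ` {..n})"
  by (auto simp: psupp_def Jpoly_minus_def Jpoly_eq pone_eq split: if_splits)

lemma pmul_Jpoly_minus_left:
  assumes "finite (psupp g)"
  shows "pmul (Jpoly_minus n \<mu>) g (E,F) = pmul (Jpoly n) g (E,F) - of_real \<mu> * g (E,F)"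
  using assms unfolding Jpoly_minus_def
  by (simp add: pmul_diff_cmult_left psupp_Jpoly psupp_pone pmul_pone_left)

lemma wick_index_set_Jpoly_minus:
  "{K. \<exists>(A,B)\<in>psupp (Jpoly_minus n \<mu>). mle K B} = insert mzero (munit ` {..n})"
proof
  show "{K. \<exists>(A,B)\<in>psupp (Jpoly_minus n \<mu>). mle K B} \<subseteq> insert mzero (munit ` {..n})"
  proof
    fix K
    assume "K \<in> {K. \<exists>(A,B)\<in>psupp (Jpoly_minus n \<mu>). mle K B}"
    then obtain A B where "(A,B) \<in> psupp (Jpoly_minus n \<mu>)" "mle K B"
      by blast
    moreover from \<open>(A,B) \<in> psupp (Jpoly_minus n \<mu>)\<close> have "B = mzero \<or> (\<exists>j\<le>n. B = munit j)"
      using psupp_Jpoly_minus[of n \<mu>] by auto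
    ultimately show "K \<in> insert mzero (munit ` {..n})"
      by (auto simp: mle_munit_iff)
  qed
  have "(munit j, munit j) \<in> psupp (Jpoly_minus n \<mu>)" if "j \<le> n" for j
    using that by (auto simp: psupp_def Jpoly_minus_def Jpoly_eq pone_eq)
  then show "insert mzero (munit ` {..n}) \<subseteq> {K. \<exists>(A,B)\<in>psupp (Jpoly_minus n \<mu>). mle K B}"
    by (force simp: mle_munit_iff)
qed

lemma dzbar_mzero [simp]: "dzbar mzero f = f"
  using mfact_pos by (auto simp: dzbar_def fun_eq_iff)

lemma dz_mzero [simp]: "dz mzero f = f"
  using mfact_pos by (auto simp: dz_def fun_eq_iff)

lemma finite_psupp_dz: "finite (psupp g) \<Longrightarrow> finite (psupp (dz K g))"
proof -
  assume fin: "finite (psupp g)"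
  have "psupp (dz K g) \<subseteq> (\<lambda>(E,B). (madd E K, B)) -` psupp g"
    by (auto simp: psupp_def dz_def)
  moreover have "finite ((\<lambda>(E,B). (madd E K, B)) -` psupp g)"
    by (rule finite_vimageI[OF fin]) (auto simp: inj_on_def madd_right_cancel)
  ultimately show ?thesis
    by (rule finite_subset)
qed

lemma dzbar_munit_Jpoly_minus:
  assumes "j \<le> n"
  shows "dzbar (munit j) (Jpoly_minus n \<mu>) (A,E) = (if A = munit j \<and> E = mzero then 1 else 0)"
  using assms madd_munit_neq_mzero[of E j]
  by (auto simp: dzbar_def Jpoly_minus_def Jpoly_eq pone_eq madd_munit_eq_munit_iff)

lemma pmul_dzbar_dz_munit_Jpoly_minus:
  assumes g: "g \<in> Alg n" and j: "j \<le> n"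
  shows "pmul (dzbar (munit j) (Jpoly_minus n \<mu>)) (dz (munit j) g) (E,F) = of_nat (E j) * g (E,F)"
proof -
  have "psupp (dzbar (munit j) (Jpoly_minus n \<mu>)) \<subseteq> {(munit j, mzero)}"
    by (auto simp: psupp_def dzbar_munit_Jpoly_minus[OF j] split: if_splits)
  then have "pmul (dzbar (munit j) (Jpoly_minus n \<mu>)) (dz (munit j) g) (E,F) =
      (if mle (munit j) E then dz (munit j) g (msub E (munit j), F) else 0)"
    using finite_psupp_dz[OF Alg_finite_psupp[OF g]]
    by (simp add: pmul_eq_sum[of _ "{(munit j, mzero)}"] dzbar_munit_Jpoly_minus[OF j])
  also have "\<dots> = of_nat (E j) * g (E,F)"
  proof (cases "E j = 0 \<or> g (E,F) = 0")
    case False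
    then have "mle (munit j) E" "mfact E = E j * mfact (msub E (munit j))"
      using Alg_nonzeroD[OF g] mfact_eq_mult_mfact_msub_munit[OF _ j] by (auto simp: munit_mle_iff)
    then show ?thesis
      using mfact_pos[of "msub E (munit j)"] by (simp add: dz_def madd_msub)
  qed (auto simp: munit_mle_iff dz_def madd_msub)
  finally show ?thesis .
qed

definition homogeneous :: "nat \<Rightarrow> nat \<Rightarrow> wpoly \<Rightarrow> bool" where
  "homogeneous n k g \<longleftrightarrow> g \<in> Alg n \<and> (\<forall>(A,B)\<in>psupp g. mabs A = k)"

lemma wick_Jpoly_minus_homogeneous:
  assumes "homogeneous n k g"
  shows "wick h (Jpoly_minus n \<mu>) g (E,F) = pmul (Jpoly_minus n \<mu>) g (E,F) + of_real (h * k) * g (E,F)"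
proof -
  have g: "g \<in> Alg n"
    using assms by (simp add: homogeneous_def)
  have inj: "inj_on munit {..n}"
    by (auto simp: inj_on_def)
  have notin: "mzero \<notin> munit ` {..n}"
    by auto
  have "wick h (Jpoly_minus n \<mu>) g (E,F) = (\<Sum>K\<in>insert mzero (munit ` {..n}).
      of_real (h ^ mabs K / real (mfact K)) * pmul (dzbar K (Jpoly_minus n \<mu>)) (dz K g) (E,F))"
    unfolding wick_def wick_index_set_Jpoly_minus ..
  also have "\<dots> = pmul (Jpoly_minus n \<mu>) g (E,F) + of_real h * (\<Sum>j\<le>n. of_nat (E j) * g (E,F))"
    by (simp add: sum.insert[OF _ notin] sum.reindex[OF inj] sum_distrib_left
        pmul_dzbar_dz_munit_Jpoly_minus[OF g])
  also have "(\<Sum>j\<le>n. of_nat (E j) * g (E,F)) = of_nat k * g (E,F)"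
  proof (cases "g (E,F) = 0")
    case False
    \<comment> \<open>Euler's identity: every monomial of g has degree k in z\<close>
    then have "mabs E = k" "\<forall>i>n. E i = 0"
      using assms Alg_nonzeroD[OF g] by (auto simp: homogeneous_def psupp_def)
    then have "(\<Sum>j\<le>n. of_nat (E j)) = (of_nat k :: complex)"
      using mabs_eq_sum_atMost by (metis of_nat_sum)
    then show ?thesis
      by (simp flip: sum_distrib_right)
  qed simp
  finally show ?thesis
    by simp
qed

lemma homogeneous_pone: "homogeneous n 0 pone"
  by (auto simp: homogeneous_def Alg_def psupp_pone)

lemma psupp_pmul_JpolyE:
  assumes "finite (psupp g)" "(E,F) \<in> psupp (pmul (Jpoly n) g)"
  obtains j C D where "j \<le> n" "(C,D) \<in> psupp g" "E = madd C (munit j)" "F = madd D (munit j)"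
proof -
  have "(\<Sum>j\<le>n. if mle (munit j) E \<and> mle (munit j) F
          then g (msub E (munit j), msub F (munit j)) else 0) \<noteq> 0"
    using assms by (simp add: psupp_def pmul_Jpoly_left)
  then obtain j where "j \<in> {..n}" "(if mle (munit j) E \<and> mle (munit j) F
          then g (msub E (munit j), msub F (munit j)) else 0) \<noteq> 0"
    by (rule sum.not_neutral_contains_not_neutral)
  then show ?thesis
    using that[of j "msub E (munit j)" "msub F (munit j)"]
    by (auto simp: psupp_def madd_msub split: if_splits)
qed

lemma homogeneous_pmul_Jpoly:
  assumes "homogeneous n k g"
  shows "homogeneous n (Suc k) (pmul (Jpoly n) g)"
proof -
  have g: "g \<in> Alg n" and fin: "finite (psupp g)"
    using assms by (auto simp: homogeneous_def Alg_finite_psupp)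
  let ?shift = "\<lambda>j (C,D). (madd C (munit j), madd D (munit j))"
  have "psupp (pmul (Jpoly n) g) \<subseteq> (\<Union>j\<le>n. ?shift j ` psupp g)"
    by (force elim: psupp_pmul_JpolyE[OF fin])
  then have "finite (psupp (pmul (Jpoly n) g))"
    by (rule finite_subset) (simp add: fin)
  moreover have "(\<forall>i>n. E i = 0) \<and> (\<forall>i>n. F i = 0) \<and> mabs E = Suc k \<and> mabs F = Suc k"
    if "(E,F) \<in> psupp (pmul (Jpoly n) g)" for E F
  proof -
    from that obtain j C D where "j \<le> n" "(C,D) \<in> psupp g"
        and [simp]: "E = madd C (munit j)" "F = madd D (munit j)"
      by (rule psupp_pmul_JpolyE[OF fin])
    moreover from \<open>(C,D) \<in> psupp g\<close> have "(\<forall>i>n. C i = 0) \<and> (\<forall>i>n. D i = 0) \<and> mabs C = k \<and> mabs D = k"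
      using assms Alg_nonzeroD[OF g] by (auto simp: homogeneous_def psupp_def)
    ultimately show ?thesis
      using mabs_madd_munit[of n C j] mabs_madd_munit[of n D j] by (simp add: madd_def munit_def)
  qed
  ultimately show ?thesis
    by (auto simp: homogeneous_def Alg_def)
qed

lemma homogeneous_ppow_Jpoly: "homogeneous n k (ppow (Jpoly n) k)"
  by (induction k) (simp_all add: homogeneous_pone homogeneous_pmul_Jpoly)

lemma star_ideal_zero: "(\<lambda>p. 0) \<in> star_ideal n h a"
  using star_ideal.smult[OF star_ideal.gen, of 0] by simp

lemma star_ideal_sum:
  assumes "\<And>k. k \<in> S \<Longrightarrow> x k \<in> star_ideal n h a"
  shows "(\<lambda>p. \<Sum>k\<in>S. c k * x k p) \<in> star_ideal n h a"
proof (cases "finite S")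
  case True
  then show ?thesis
    using assms
  proof (induction S rule: finite_induct)
    case (insert k S)
    then show ?case
      using star_ideal.add[OF star_ideal.smult[of "x k" n h a "c k"]] by simp
  qed (simp add: star_ideal_zero)
qed (simp add: star_ideal_zero)

(* The value of Omega on J^k, since tau_k(J^k) = 1. *)
definition Omega_coeff :: "real \<Rightarrow> real \<Rightarrow> nat \<Rightarrow> complex" where
  "Omega_coeff h \<mu> k = of_real (h ^ k * ffall (\<mu> / h) k)"

lemma Omega_coeff_Suc:
  "h \<noteq> 0 \<Longrightarrow> Omega_coeff h \<mu> (Suc k) = of_real (\<mu> - h * k) * Omega_coeff h \<mu> k"
  by (simp add: Omega_coeff_def ffall_def field_simps)

lemma ppow_Jpoly_minus_Omega_coeff_in_star_ideal:
  assumes "h \<noteq> 0"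
  shows "(\<lambda>p. ppow (Jpoly n) k p - Omega_coeff h \<mu> k * pone p) \<in> star_ideal n h (Jpoly_minus n \<mu>)"
proof (induction k)
  case 0
  then show ?case
    using star_ideal_zero by (simp add: Omega_coeff_def ffall_def)
next
  case (Suc k)
  let ?X = "Jpoly_minus n \<mu>" and ?g = "ppow (Jpoly n) k"
  have hom: "homogeneous n k ?g"
    by (rule homogeneous_ppow_Jpoly)
  then have "wick h ?X ?g \<in> star_ideal n h ?X"
    by (auto simp: homogeneous_def intro: star_ideal.rmult[OF star_ideal.gen])
  then have "(\<lambda>p. wick h ?X ?g p + of_real (\<mu> - h * k) * (?g p - Omega_coeff h \<mu> k * pone p))
      \<in> star_ideal n h ?X"
    using Suc.IH by (intro star_ideal.add star_ideal.smult)
  moreover have "(\<lambda>p. wick h ?X ?g p + of_real (\<mu> - h * k) * (?g p - Omega_coeff h \<mu> k * pone p))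
      = (\<lambda>p. ppow (Jpoly n) (Suc k) p - Omega_coeff h \<mu> (Suc k) * pone p)" (is "?lhs = ?rhs")
  proof
    fix p
    have "finite (psupp ?g)"
      using hom by (simp add: homogeneous_def Alg_def)
    then show "?lhs p = ?rhs p"
      by (cases p) (simp add: wick_Jpoly_minus_homogeneous[OF hom] pmul_Jpoly_minus_left
          Omega_coeff_Suc[OF assms] algebra_simps)
  qed
  ultimately show ?case
    by simp
qed

theorem proposition5p7:
  fixes n :: nat and h :: real and \<mu> :: real and f :: wpoly
  assumes "0 < h" and "f \<in> Alg n"
  shows "(\<lambda>p. Omega n h \<mu> f * pone p - favg n f p)
           \<in> star_ideal n h (\<lambda>p. Jpoly n p - of_real \<mu> * pone p)"
proof -
  have "(\<lambda>p. \<Sum>k\<in>degs f. - tau n k (hpart f k) * (ppow (Jpoly n) k p - Omega_coeff h \<mu> k * pone p))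
      \<in> star_ideal n h (Jpoly_minus n \<mu>)"
    using assms(1) by (intro star_ideal_sum ppow_Jpoly_minus_Omega_coeff_in_star_ideal) simp
  moreover have "(\<Sum>k\<in>degs f. - tau n k (hpart f k) * (ppow (Jpoly n) k p - Omega_coeff h \<mu> k * pone p))
      = Omega n h \<mu> f * pone p - favg n f p" for p
    by (simp add: Omega_def favg_def Omega_coeff_def sum_distrib_left sum_distrib_right sum_subtractf algebra_simps)
  ultimately show ?thesis
    by (simp add: Jpoly_minus_def)
qed

end
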